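(* Let $m\ge 2$, let $f(t)=t^m-\sum_{s=0}^{m-1}u_{m-s}t^s$ with $u_1,\dots,u_m\in\mathbb{Q}$ have $m$ distinct roots $\alpha_1,\dots,\alpha_m$, let $V$ be the Vandermonde matrix $V_{s,j}=\alpha_s^{\,j-1}$, let $\mathbf{x}=(x_0,\dots,x_{m-1})\in\mathbb{Q}^m$, $M=\sum_{n=0}^{m-1}x_nA^n$ with $A$ the companion matrix of $f$, and $\gamma_s=\sum_{i=0}^{m-1}x_i\alpha_s^i$. Fix $k\in\{1,\dots,m\}$ and indices $i,j,p,q\in\{1,\dots,m\}$, $(i,j)\ne(p,q)$, and set $A_s=(V^{-1})_{i,s}V_{s,j}$, $B_s=(V^{-1})_{p,s}V_{s,q}$ for $s=1,\dots,m$, with $B_k\neq0$, and $L=A_k/B_k$. Suppose $$0<c^{-1}(\mathbf{x},\alpha_k):=\max\left\{\frac{|\gamma_s|}{|\gamma_k|}: s\ne k\right\}<1,$$ let $l\neq k$ be an index with $c^{-1}(\mathbf{x},\alpha_k)=|\gamma_l|/|\gamma_k|$, and assume $A_lB_k-A_kB_l\neq 0$. Then there is a constant $C>0$ such that for all sufficiently large $n$, $$\left|\frac{M^n_{i,j}}{M^n_{p,q}}-L\right|\le C\,\bigl(c^{-1}(\mathbf{x},\alpha_k)\bigr)^n,$$ i.e. the error is $O\bigl((c^{-1}(\mathbf{x},\alpha_k))^n\bigr)$.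
   Context: The companion matrix $A=(A_{a,b})$ of $f(t)=t^m-\sum_{s=0}^{m-1}u_{m-s}t^s$ is the $m\times m$ matrix with $A_{a+1,a}=1$ for $a=1,\dots,m-1$, last column $(A_{1,m},\dots,A_{m,m})^T=(u_m,u_{m-1},\dots,u_1)^T$, and all other entries $0$. $M^n_{a,b}$ denotes the $(a,b)$-entry of the $n$-th power of $M$; $(V^{-1})_{a,b}$ denotes the $(a,b)$-entry of the inverse of $V$. *)

theory Defs
  imports "Jordan_Normal_Form.Gauss_Jordan_Elimination" "HOL-Computational_Algebra.Polynomial"
begin

text \<open>Indices are 0-based: paper index a in 1..m corresponds to a-1 in 0..<m.\<close>

text \<open>Companion matrix of t^m - sum_{s<m} u_{m-s} t^s (over the complex numbers).
  Paper: A_{a+1,a} = 1, last column (u_m,...,u_1)^T.\<close>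
definition companion_mat :: "nat \<Rightarrow> (nat \<Rightarrow> complex) \<Rightarrow> complex mat" where
  "companion_mat m u = mat m m (\<lambda>(a,b).
     if b = m - 1 then u (m - a) else if a = b + 1 then 1 else 0)"

definition char_poly_u :: "nat \<Rightarrow> (nat \<Rightarrow> complex) \<Rightarrow> complex poly" where
  "char_poly_u m u = monom 1 m - (\<Sum>s<m. monom (u (m - s)) s)"

definition vandermonde :: "nat \<Rightarrow> (nat \<Rightarrow> complex) \<Rightarrow> complex mat" where
  "vandermonde m \<alpha> = mat m m (\<lambda>(s,j). \<alpha> s ^ j)"

definition poly_in_mat :: "nat \<Rightarrow> (nat \<Rightarrow> complex) \<Rightarrow> complex mat \<Rightarrow> complex mat" where
  "poly_in_mat m x A = mat m m (\<lambda>(a,b). \<Sum>n<m. x n * (A ^\<^sub>m n) $$ (a,b))"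

definition gam :: "nat \<Rightarrow> (nat \<Rightarrow> complex) \<Rightarrow> (nat \<Rightarrow> complex) \<Rightarrow> nat \<Rightarrow> complex" where
  "gam m x \<alpha> s = (\<Sum>t<m. x t * \<alpha> s ^ t)"

definition vcoef :: "nat \<Rightarrow> (nat \<Rightarrow> complex) \<Rightarrow> nat \<Rightarrow> nat \<Rightarrow> nat \<Rightarrow> complex" where
  "vcoef m \<alpha> a b s = the (mat_inverse (vandermonde m \<alpha>)) $$ (a, s) * vandermonde m \<alpha> $$ (s, b)"

definition cinv :: "nat \<Rightarrow> (nat \<Rightarrow> complex) \<Rightarrow> (nat \<Rightarrow> complex) \<Rightarrow> nat \<Rightarrow> real" where
  "cinv m x \<alpha> k = Max {cmod (gam m x \<alpha> s) / cmod (gam m x \<alpha> k) | s. s < m \<and> s \<noteq> k}"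

end

theory Submission imports Defs "Jordan_Normal_Form.Determinant" begin

text \<open>The rows of the Vandermonde matrix are left eigenvectors of the companion matrix, with
  eigenvalues the roots \<open>\<alpha>\<^sub>s\<close>; hence they are left eigenvectors of \<open>M\<close> with eigenvalues
  \<open>\<gamma>\<^sub>s\<close>, and \<open>M\<^sup>n = V\<^sup>-\<^sup>1 diag(\<gamma>\<^sub>s\<^sup>n) V\<close> expresses every entry of \<open>M\<^sup>n\<close> as
  \<open>\<Sum>\<^sub>s (V\<^sup>-\<^sup>1)\<^sub>a\<^sub>,\<^sub>s V\<^sub>s\<^sub>,\<^sub>b \<gamma>\<^sub>s\<^sup>n\<close>. Dividing numerator and denominator of the
  quotient by \<open>\<gamma>\<^sub>k\<^sup>n\<close>, every term except the \<open>k\<close>-th decays like \<open>c\<^sup>n\<close>, which gives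
  the error bound.\<close>

lemma index_mult_mat_sum:
  assumes "A \<in> carrier_mat m m" "B \<in> carrier_mat m m" "s < m" "b < m"
  shows "(A * B) $$ (s, b) = (\<Sum>a<m. A $$ (s, a) * B $$ (a, b))"
  using assms by (auto simp: scalar_prod_def lessThan_atLeast0 intro!: sum.cong)

lemma left_eigen_mult_pow:
  fixes X V :: "'a::comm_ring_1 mat"
  assumes X: "X \<in> carrier_mat m m" and V: "V \<in> carrier_mat m m"
    and eigen: "\<And>s b. s < m \<Longrightarrow> b < m \<Longrightarrow> (V * X) $$ (s, b) = lam s * V $$ (s, b)"
    and "s < m" "b < m"
  shows "(V * X ^\<^sub>m n) $$ (s, b) = lam s ^ n * V $$ (s, b)"
  using \<open>b < m\<close>
proof (induction n arbitrary: b)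
  case 0
  then show ?case using X V \<open>s < m\<close> by simp
next
  case (Suc n)
  have "V * X ^\<^sub>m Suc n = (V * X ^\<^sub>m n) * X"
    using X V by (simp add: assoc_mult_mat[symmetric, of V m m "X ^\<^sub>m n" m X m])
  hence "(V * X ^\<^sub>m Suc n) $$ (s, b) = (\<Sum>a<m. (V * X ^\<^sub>m n) $$ (s, a) * X $$ (a, b))"
    using index_mult_mat_sum[OF _ X \<open>s < m\<close> Suc.prems, of "V * X ^\<^sub>m n"] X V by simp
  also have "\<dots> = lam s ^ n * (\<Sum>a<m. V $$ (s, a) * X $$ (a, b))"
    using Suc.IH by (simp add: sum_distrib_left mult.assoc)
  also have "\<dots> = lam s ^ n * (lam s * V $$ (s, b))"
    using index_mult_mat_sum[OF V X \<open>s < m\<close> Suc.prems] eigen[OF \<open>s < m\<close> Suc.prems] by simp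
  finally show ?case by simp
qed

lemma left_eigen_poly_in_mat:
  fixes A V :: "complex mat"
  assumes A: "A \<in> carrier_mat m m" and V: "V \<in> carrier_mat m m"
    and eigen: "\<And>s b. s < m \<Longrightarrow> b < m \<Longrightarrow> (V * A) $$ (s, b) = lam s * V $$ (s, b)"
    and sb: "s < m" "b < m"
  shows "(V * poly_in_mat m x A) $$ (s, b) = (\<Sum>t<m. x t * lam s ^ t) * V $$ (s, b)"
proof -
  have "(V * poly_in_mat m x A) $$ (s, b)
      = (\<Sum>a<m. V $$ (s, a) * (\<Sum>t<m. x t * (A ^\<^sub>m t) $$ (a, b)))"
    using index_mult_mat_sum[OF V _ sb] sb by (simp add: poly_in_mat_def)
  also have "\<dots> = (\<Sum>t<m. x t * (\<Sum>a<m. V $$ (s, a) * (A ^\<^sub>m t) $$ (a, b)))"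
    unfolding sum_distrib_left by (subst sum.swap) (simp add: mult_ac)
  also have "\<dots> = (\<Sum>t<m. x t * (lam s ^ t * V $$ (s, b)))"
    using index_mult_mat_sum[OF V pow_carrier_mat[OF A] sb] left_eigen_mult_pow[OF A V eigen sb]
    by simp
  also have "\<dots> = (\<Sum>t<m. x t * lam s ^ t) * V $$ (s, b)"
    by (simp add: sum_distrib_right mult.assoc)
  finally show ?thesis .
qed

lemma mat_pow_entry_left_eigenbasis:
  fixes X V W :: "'a::comm_ring_1 mat"
  assumes X: "X \<in> carrier_mat m m" and V: "V \<in> carrier_mat m m" and W: "W \<in> carrier_mat m m"
    and inv: "W * V = 1\<^sub>m m"
    and eigen: "\<And>s b. s < m \<Longrightarrow> b < m \<Longrightarrow> (V * X) $$ (s, b) = lam s * V $$ (s, b)"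
    and ab: "a < m" "b < m"
  shows "(X ^\<^sub>m n) $$ (a, b) = (\<Sum>s<m. W $$ (a, s) * V $$ (s, b) * lam s ^ n)"
proof -
  have "X ^\<^sub>m n = W * (V * X ^\<^sub>m n)"
    using inv W V X by (simp add: assoc_mult_mat[symmetric, of W m m V m "X ^\<^sub>m n" m])
  hence "(X ^\<^sub>m n) $$ (a, b) = (\<Sum>s<m. W $$ (a, s) * (V * X ^\<^sub>m n) $$ (s, b))"
    using index_mult_mat_sum[OF W _ ab, of "V * X ^\<^sub>m n"] V X by simp
  also have "\<dots> = (\<Sum>s<m. W $$ (a, s) * V $$ (s, b) * lam s ^ n)"
    using left_eigen_mult_pow[OF X V eigen] ab by (intro sum.cong) (auto simp: mult_ac)
  finally show ?thesis .
qed

lemma power_row_mult_companion: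
  assumes root: "poly (char_poly_u m u) z = 0" and "b < m"
  shows "(\<Sum>a<m. z ^ a * companion_mat m u $$ (a, b)) = z * z ^ b"
proof (cases "b = m - 1")
  case True
  have "(\<Sum>a<m. z ^ a * companion_mat m u $$ (a, b)) = (\<Sum>a<m. u (m - a) * z ^ a)"
    using True by (intro sum.cong) (auto simp: companion_mat_def)
  also have "\<dots> = z ^ m"
    using root by (simp add: char_poly_u_def poly_sum poly_monom)
  finally show ?thesis using True \<open>b < m\<close> by (simp flip: power_Suc)
next
  case False
  have "(\<Sum>a<m. z ^ a * companion_mat m u $$ (a, b)) = (\<Sum>a<m. if a = Suc b then z ^ a else 0)"
    using False \<open>b < m\<close> by (intro sum.cong) (auto simp: companion_mat_def)
  then show ?thesis using False \<open>b < m\<close> by simp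
qed

lemma vandermonde_mult_companion:
  assumes "\<And>s. s < m \<Longrightarrow> poly (char_poly_u m u) (\<alpha> s) = 0" and sb: "s < m" "b < m"
  shows "(vandermonde m \<alpha> * companion_mat m u) $$ (s, b) = \<alpha> s * vandermonde m \<alpha> $$ (s, b)"
  using index_mult_mat_sum[of "vandermonde m \<alpha>" m "companion_mat m u", OF _ _ sb]
    power_row_mult_companion[OF assms(1)[OF sb(1)] sb(2)] sb
  by (simp add: vandermonde_def companion_mat_def)

lemma det_vandermonde_nonzero:
  assumes inj: "inj_on \<alpha> {..<m}"
  shows "det (vandermonde m \<alpha>) \<noteq> 0"
proof
  let ?V = "vandermonde m \<alpha>"
  have V: "?V \<in> carrier_mat m m" by (simp add: vandermonde_def)
  assume "det ?V = 0"
  then obtain v where v: "v \<in> carrier_vec m" "v \<noteq> 0\<^sub>v m" "?V *\<^sub>v v = 0\<^sub>v m"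
    using det_0_iff_vec_prod_zero[OF V] by auto
  define p where "p = (\<Sum>j<m. monom (v $ j) j)"
  have coeff_p: "coeff p j = (if j < m then v $ j else 0)" for j
    unfolding p_def by (simp add: coeff_sum coeff_monom)
  have root: "poly p (\<alpha> s) = 0" if "s < m" for s
  proof -
    have "(\<Sum>j<m. \<alpha> s ^ j * v $ j) = (?V *\<^sub>v v) $ s"
      using that v(1) by (simp add: vandermonde_def scalar_prod_def lessThan_atLeast0)
    thus ?thesis using v(3) that unfolding p_def by (simp add: poly_sum poly_monom mult.commute)
  qed
  have "p = 0"
  proof (cases "m = 0")
    case True thus ?thesis by (simp add: p_def)
  next
    case False
    have "degree p \<le> m - 1" by (rule degree_le) (auto simp: coeff_p)
    moreover have "card (\<alpha> ` {..<m}) = m" using card_image[OF inj] by simp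
    ultimately show ?thesis
      using False root by (intro poly_eqI_degree[of "\<alpha> ` {..<m}"]) auto
  qed
  hence "v $ j = 0" if "j < m" for j using coeff_p[of j] that by simp
  hence "v = 0\<^sub>v m" using v(1) by (intro eq_vecI) auto
  with v(2) show False by simp
qed

lemma mat_inverse_vandermonde:
  assumes "inj_on \<alpha> {..<m}"
  obtains W where "mat_inverse (vandermonde m \<alpha>) = Some W"
    and "W \<in> carrier_mat m m" and "W * vandermonde m \<alpha> = 1\<^sub>m m"
proof -
  let ?V = "vandermonde m \<alpha>"
  have V: "?V \<in> carrier_mat m m" by (simp add: vandermonde_def)
  have "?V \<in> Units (ring_mat TYPE(complex) m ())"
    using det_non_zero_imp_unit[OF V] det_vandermonde_nonzero[OF assms] by simp
  then obtain W where "mat_inverse ?V = Some W"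
    using mat_inverse(1)[OF V, of "()"] by (cases "mat_inverse ?V") auto
  with mat_inverse(2)[OF V this] that show ?thesis by auto
qed

lemma poly_in_mat_companion_pow_entry:
  assumes roots: "\<And>s. s < m \<Longrightarrow> poly (char_poly_u m u) (\<alpha> s) = 0"
    and inj: "inj_on \<alpha> {..<m}" and ab: "a < m" "b < m"
  shows "(poly_in_mat m x (companion_mat m u) ^\<^sub>m n) $$ (a, b)
    = (\<Sum>s<m. vcoef m \<alpha> a b s * gam m x \<alpha> s ^ n)"
proof -
  let ?V = "vandermonde m \<alpha>" and ?A = "companion_mat m u"
  have V: "?V \<in> carrier_mat m m" and A: "?A \<in> carrier_mat m m"
    and M: "poly_in_mat m x ?A \<in> carrier_mat m m"
    by (simp_all add: vandermonde_def companion_mat_def poly_in_mat_def)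
  obtain W where W: "mat_inverse ?V = Some W" "W \<in> carrier_mat m m" "W * ?V = 1\<^sub>m m"
    using mat_inverse_vandermonde[OF inj] by blast
  have "(?V * poly_in_mat m x ?A) $$ (s, b) = gam m x \<alpha> s * ?V $$ (s, b)"
    if "s < m" "b < m" for s b
    using left_eigen_poly_in_mat[OF A V vandermonde_mult_companion[OF roots] that]
    by (simp add: gam_def)
  from mat_pow_entry_left_eigenbasis[OF M V W(2,3) this ab] show ?thesis
    by (simp add: vcoef_def W(1))
qed

lemma norm_sum_mult_power_le:
  fixes b r :: "'i \<Rightarrow> complex"
  assumes "\<And>s. s \<in> S \<Longrightarrow> cmod (r s) \<le> c"
  shows "cmod (\<Sum>s\<in>S. b s * r s ^ n) \<le> (\<Sum>s\<in>S. cmod (b s)) * c ^ n"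
proof -
  have "cmod (\<Sum>s\<in>S. b s * r s ^ n) \<le> (\<Sum>s\<in>S. cmod (b s) * c ^ n)"
    using assms by (intro order_trans[OF norm_sum] sum_mono)
      (auto simp: norm_mult norm_power intro!: mult_left_mono power_mono)
  thus ?thesis by (simp add: sum_distrib_right)
qed

lemma ratio_sums_dominant_term_bound:
  fixes a b r :: "'i \<Rightarrow> complex" and c :: real
  assumes S: "finite S" "k \<in> S" and rk: "r k = 1" and bk: "b k \<noteq> 0"
    and c: "0 < c" "c < 1" and r: "\<And>s. s \<in> S - {k} \<Longrightarrow> cmod (r s) \<le> c"
  shows "\<exists>C>0. \<forall>\<^sub>F n in sequentially.
    cmod ((\<Sum>s\<in>S. a s * r s ^ n) / (\<Sum>s\<in>S. b s * r s ^ n) - a k / b k) \<le> C * c ^ n"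
proof -
  define e where "e s = a s * b k - a k * b s" for s
  define E where "E = (\<Sum>s\<in>S-{k}. cmod (e s))"
  define B where "B = (\<Sum>s\<in>S-{k}. cmod (b s))"
  define C where "C = 2 * E / cmod (b k) ^ 2 + 1"
  have bk_pos: "cmod (b k) > 0" using bk by simp
  have "C > 0" unfolding C_def E_def by (simp add: add_nonneg_pos sum_nonneg)
  have "(\<lambda>n. B * c ^ n) \<longlonglongrightarrow> B * 0"
    by (intro tendsto_mult tendsto_const LIMSEQ_power_zero) (use c in auto)
  hence "\<forall>\<^sub>F n in sequentially. B * c ^ n < cmod (b k) / 2"
    using bk_pos by (intro order_tendstoD(2)) auto
  hence "\<forall>\<^sub>F n in sequentially.
    cmod ((\<Sum>s\<in>S. a s * r s ^ n) / (\<Sum>s\<in>S. b s * r s ^ n) - a k / b k) \<le> C * c ^ n"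
  proof eventually_elim
    case (elim n)
    define P where "P = (\<Sum>s\<in>S. b s * r s ^ n)"
    have "P = b k + (\<Sum>s\<in>S-{k}. b s * r s ^ n)"
      unfolding P_def using S rk by (simp add: sum.remove)
    moreover have "cmod (\<Sum>s\<in>S-{k}. b s * r s ^ n) < cmod (b k) / 2"
      using norm_sum_mult_power_le[where S="S-{k}" and r=r and b=b and n=n, OF r] elim
      by (simp add: B_def)
    ultimately have P_ge: "cmod P \<ge> cmod (b k) / 2"
      using norm_triangle_ineq2[of "b k" "- (\<Sum>s\<in>S-{k}. b s * r s ^ n)"] by simp
    hence "P \<noteq> 0" using bk_pos by auto
    have "(\<Sum>s\<in>S. e s * r s ^ n) = (\<Sum>s\<in>S. a s * r s ^ n) * b k - a k * P"
      unfolding e_def P_def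
      by (simp add: algebra_simps sum_subtractf sum_distrib_left sum_distrib_right)
    moreover have "(\<Sum>s\<in>S. e s * r s ^ n) = (\<Sum>s\<in>S-{k}. e s * r s ^ n)"
      using S by (simp add: sum.remove e_def)
    ultimately have diff: "(\<Sum>s\<in>S. a s * r s ^ n) / P - a k / b k
        = (\<Sum>s\<in>S-{k}. e s * r s ^ n) / (P * b k)"
      using \<open>P \<noteq> 0\<close> bk by (simp add: field_simps)
    have "cmod ((\<Sum>s\<in>S-{k}. e s * r s ^ n) / (P * b k))
        \<le> E * c ^ n / (cmod (b k) / 2 * cmod (b k))"
      unfolding norm_divide norm_mult
      using norm_sum_mult_power_le[where S="S-{k}" and r=r and b=e and n=n, OF r] P_ge bk_pos c
      by (intro frac_le mult_right_mono mult_pos_pos) (auto simp: E_def sum_nonneg)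
    also have "\<dots> \<le> C * c ^ n"
      using bk_pos c by (simp add: C_def power2_eq_square field_simps)
    finally show ?case using diff by (simp only: P_def)
  qed
  with \<open>C > 0\<close> show ?thesis by blast
qed

lemma ratio_exponential_sums_dominant_term_bound:
  fixes a b g :: "'i \<Rightarrow> complex" and c :: real
  assumes S: "finite S" "k \<in> S" and gk: "g k \<noteq> 0" and bk: "b k \<noteq> 0" and c: "0 < c" "c < 1"
    and dominated: "\<And>s. s \<in> S - {k} \<Longrightarrow> cmod (g s) / cmod (g k) \<le> c"
  shows "\<exists>C>0. \<forall>\<^sub>F n in sequentially.
    cmod ((\<Sum>s\<in>S. a s * g s ^ n) / (\<Sum>s\<in>S. b s * g s ^ n) - a k / b k) \<le> C * c ^ n"
proof -
  define r where "r s = g s / g k" for s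
  have rescale: "(\<Sum>s\<in>S. d s * g s ^ n) = g k ^ n * (\<Sum>s\<in>S. d s * r s ^ n)"
    for d :: "'i \<Rightarrow> complex" and n
    using gk by (simp add: r_def sum_distrib_left power_divide field_simps)
  have "r k = 1" using gk by (simp add: r_def)
  moreover have "cmod (r s) \<le> c" if "s \<in> S - {k}" for s
    using dominated[OF that] by (simp add: r_def norm_divide)
  ultimately have "\<exists>C>0. \<forall>\<^sub>F n in sequentially.
    cmod ((\<Sum>s\<in>S. a s * r s ^ n) / (\<Sum>s\<in>S. b s * r s ^ n) - a k / b k) \<le> C * c ^ n"
    by (rule ratio_sums_dominant_term_bound[where k=k and b=b and r=r, OF S _ bk c])
  moreover have "(\<Sum>s\<in>S. a s * g s ^ n) / (\<Sum>s\<in>S. b s * g s ^ n)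
      = (\<Sum>s\<in>S. a s * r s ^ n) / (\<Sum>s\<in>S. b s * r s ^ n)" for n
    unfolding rescale using gk by simp
  ultimately show ?thesis by simp
qed

text \<open>The hypotheses \<open>m \<ge> 2\<close>, \<open>(i, j) \<noteq> (p, q)\<close> and \<open>A\<^sub>l B\<^sub>k - A\<^sub>k B\<^sub>l \<noteq> 0\<close> only ensure
  that the rate \<open>c\<^sup>n\<close> is attained; the upper bound does not use them.\<close>

theorem theorem2:
  fixes m :: nat and u x :: "nat \<Rightarrow> rat" and \<alpha> :: "nat \<Rightarrow> complex"
    and k i j p q l :: nat
  defines "f \<equiv> char_poly_u m (\<lambda>s. of_rat (u s))"
    and "M \<equiv> poly_in_mat m (\<lambda>s. of_rat (x s)) (companion_mat m (\<lambda>s. of_rat (u s)))"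
    and "\<gamma> \<equiv> gam m (\<lambda>s. of_rat (x s)) \<alpha>"
    and "As \<equiv> vcoef m \<alpha> i j"
    and "Bs \<equiv> vcoef m \<alpha> p q"
    and "c \<equiv> cinv m (\<lambda>s. of_rat (x s)) \<alpha> k"
  assumes "m \<ge> 2"
    and roots: "\<And>s. s < m \<Longrightarrow> poly f (\<alpha> s) = 0"
    and distinct: "inj_on \<alpha> {..<m}"
    and "k < m" and "i < m" and "j < m" and "p < m" and "q < m"
    and "(i, j) \<noteq> (p, q)"
    and "Bs k \<noteq> 0"
    and "0 < c" and "c < 1"
    and "l < m" and "l \<noteq> k" and "c = cmod (\<gamma> l) / cmod (\<gamma> k)"
    and "As l * Bs k - As k * Bs l \<noteq> 0"
  shows "\<exists>C>0. \<forall>\<^sub>F n in sequentially.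
           cmod ((M ^\<^sub>m n) $$ (i, j) / (M ^\<^sub>m n) $$ (p, q) - As k / Bs k) \<le> C * c ^ n"
proof -
  have entry: "(M ^\<^sub>m n) $$ (a, b) = (\<Sum>s<m. vcoef m \<alpha> a b s * \<gamma> s ^ n)"
    if "a < m" "b < m" for a b n
    unfolding M_def \<gamma>_def
    by (rule poly_in_mat_companion_pow_entry[OF roots[unfolded f_def] distinct that])
  have "\<gamma> k \<noteq> 0" using \<open>0 < c\<close> \<open>c = cmod (\<gamma> l) / cmod (\<gamma> k)\<close> by auto
  moreover have "cmod (\<gamma> s) / cmod (\<gamma> k) \<le> c" if "s \<in> {..<m} - {k}" for s
    unfolding c_def cinv_def \<gamma>_def using that by (intro Max_ge) auto
  ultimately have "\<exists>C>0. \<forall>\<^sub>F n in sequentially.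
      cmod ((\<Sum>s<m. As s * \<gamma> s ^ n) / (\<Sum>s<m. Bs s * \<gamma> s ^ n) - As k / Bs k) \<le> C * c ^ n"
    using \<open>k < m\<close> \<open>Bs k \<noteq> 0\<close> \<open>0 < c\<close> \<open>c < 1\<close>
    by (intro ratio_exponential_sums_dominant_term_bound) auto
  then show ?thesis
    using entry \<open>i < m\<close> \<open>j < m\<close> \<open>p < m\<close> \<open>q < m\<close> by (simp add: As_def Bs_def)
qed

end
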